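(* Let $G$ be the cdf of a continuous real random variable. For $(\lambda_1,\lambda_2)\in\mathbb{R}^2$ define $$F_{R18a}(x)=(1+\lambda_1)G(x)+(\lambda_2-\lambda_1)G^2(x)-\lambda_2G^3(x),\qquad F_G(x)=\lambda_1 G(x)+(\lambda_2-\lambda_1)G^2(x)+(1-\lambda_2)G^3(x).$$ Let $\mathscr{S}_{R18a}=\{(\lambda_1,\lambda_2): -1\le\lambda_1\le1,\ -1\le\lambda_2\le1,\ -2\le\lambda_1+\lambda_2\le1\}$, $\mathscr{S}_{MR18a}=\{(\lambda_1,\lambda_2): -1\le\lambda_1\le2,\ -1\le\lambda_2\le2,\ -2\le\lambda_1+\lambda_2\le1\}$ and $\mathscr{S}_{MG}=\{(\lambda_1,\lambda_2):0\le\lambda_1\le3,\ 0\le\lambda_2\le3,\ 0\le\lambda_1+\lambda_2\le3\}$. Then: (i) For every $(\lambda_1,\lambda_2)\in\mathscr{S}_{R18a}$, $F_{R18a}$ is a cdf. (ii) For every $(\lambda_1,\lambda_2)\in\mathscr{S}_{MR18a}$, $F_{R18a}$ is a cdf. (iii) For every $(\lambda_1,\lambda_2)\in\mathscr{S}_{MR18a}$, $(\lambda_1+1,\lambda_2+1)\in\mathscr{S}_{MG}$ and $F_{R18a}$ with parameters $(\lambda_1,\lambda_2)$ coincides with $F_G$ with parameters $(\lambda_1+1,\lambda_2+1)$. (iv) For every $(\lambda_1,\lambda_2)\in\mathscr{S}_{MG}$, $(\lambda_1-1,\lambda_2-1)\in\mathscr{S}_{MR18a}$ and $F_G$ with parameters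 $(\lambda_1,\lambda_2)$ coincides with $F_{R18a}$ with parameters $(\lambda_1-1,\lambda_2-1)$.
   Context: A cdf is a nondecreasing, right-continuous function $F:\mathbb{R}\to[0,1]$ with limits $0$ at $-\infty$ and $1$ at $+\infty$. $G^k(x)=(G(x))^k$. *)

theory Defs
  imports "HOL-Analysis.Analysis"
begin

definition is_cdf :: "(real \<Rightarrow> real) \<Rightarrow> bool" where
  "is_cdf F \<longleftrightarrow> (\<forall>x. 0 \<le> F x \<and> F x \<le> 1) \<and> mono F \<and>
     (\<forall>x. continuous (at_right x) F) \<and> (F \<longlongrightarrow> 0) at_bot \<and> (F \<longlongrightarrow> 1) at_top"

definition F_R18a :: "real \<Rightarrow> real \<Rightarrow> (real \<Rightarrow> real) \<Rightarrow> real \<Rightarrow> real" where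
  "F_R18a l1 l2 G x = (1 + l1) * G x + (l2 - l1) * (G x)^2 - l2 * (G x)^3"

definition F_G :: "real \<Rightarrow> real \<Rightarrow> (real \<Rightarrow> real) \<Rightarrow> real \<Rightarrow> real" where
  "F_G l1 l2 G x = l1 * G x + (l2 - l1) * (G x)^2 + (1 - l2) * (G x)^3"

definition S_R18a :: "(real \<times> real) set" where
  "S_R18a = {(l1, l2). -1 \<le> l1 \<and> l1 \<le> 1 \<and> -1 \<le> l2 \<and> l2 \<le> 1 \<and> -2 \<le> l1 + l2 \<and> l1 + l2 \<le> 1}"

definition S_MR18a :: "(real \<times> real) set" where
  "S_MR18a = {(l1, l2). -1 \<le> l1 \<and> l1 \<le> 2 \<and> -1 \<le> l2 \<and> l2 \<le> 2 \<and> -2 \<le> l1 + l2 \<and> l1 + l2 \<le> 1}"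

definition S_MG :: "(real \<times> real) set" where
  "S_MG = {(l1, l2). 0 \<le> l1 \<and> l1 \<le> 3 \<and> 0 \<le> l2 \<and> l2 \<le> 3 \<and> 0 \<le> l1 + l2 \<and> l1 + l2 \<le> 3}"

end

theory Submission
  imports Defs
begin

text \<open>\<open>F_R18a a b G\<close> is \<open>G\<close> followed by the cubic \<open>p t = (1+a) t + (b-a) t\<^sup>2 - b t\<^sup>3\<close>,
  which fixes \<open>0\<close> and \<open>1\<close>. A continuous map that is nondecreasing on \<open>[0,1]\<close> and fixes
  \<open>0\<close> and \<open>1\<close> turns every cdf into a cdf, and
  \<open>p' u = (1-a-b) u\<^sup>2 + (1+a) (1-u)\<^sup>2 + 2 (1+b) u (1-u)\<close> is nonnegative on \<open>[0,1]\<close> as soon as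
  \<open>a, b \<ge> -1\<close> and \<open>a + b \<le> 1\<close>, which holds on both parameter sets.\<close>

lemma is_cdf_compose:
  fixes G p :: "real \<Rightarrow> real"
  assumes cdf: "is_cdf G"
    and cont: "continuous_on {0..1} p" and mono: "mono_on {0..1} p"
    and p0: "p 0 = 0" and p1: "p 1 = 1"
  shows "is_cdf (\<lambda>x. p (G x))"
proof -
  have G01: "G x \<in> {0..1}" for x
    using cdf by (simp add: is_cdf_def)
  then have ev_G01: "\<forall>\<^sub>F x in F. G x \<in> {0..1}" for F
    by simp
  have "0 \<le> p (G x) \<and> p (G x) \<le> 1" for x
    using mono_onD[OF mono, of 0 "G x"] mono_onD[OF mono, of "G x" 1] G01[of x] p0 p1 by auto
  moreover have "mono (\<lambda>x. p (G x))"
    using cdf G01 by (auto simp: is_cdf_def mono_def intro: mono_onD[OF mono])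
  moreover have "continuous (at_right x) (\<lambda>x. p (G x))" for x
    using cdf G01 ev_G01 continuous_on_tendsto_compose[OF cont, of G "G x" "at_right x"]
    by (simp add: is_cdf_def continuous_within)
  moreover have "((\<lambda>x. p (G x)) \<longlongrightarrow> 0) at_bot"
    using cdf ev_G01 continuous_on_tendsto_compose[OF cont, of G 0 at_bot] p0
    by (simp add: is_cdf_def)
  moreover have "((\<lambda>x. p (G x)) \<longlongrightarrow> 1) at_top"
    using cdf ev_G01 continuous_on_tendsto_compose[OF cont, of G 1 at_top] p1
    by (simp add: is_cdf_def)
  ultimately show ?thesis
    by (simp add: is_cdf_def)
qed

lemma R18a_cubic_mono_on:
  fixes a b :: real
  assumes "-1 \<le> a" "-1 \<le> b" "a + b \<le> 1"
  shows "mono_on {0..1} (\<lambda>t. (1 + a) * t + (b - a) * t^2 - b * t^3)"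
proof (rule mono_onI)
  fix s t :: real
  assume "s \<in> {0..1}" "t \<in> {0..1}" "s \<le> t"
  then have st: "{s..t} \<subseteq> {0..1}" "s \<le> t"
    by auto
  define p' where "p' u = (1 - a - b) * u^2 + (1 + a) * (1 - u)^2 + 2 * (1 + b) * u * (1 - u)" for u
  show "(1 + a) * s + (b - a) * s^2 - b * s^3 \<le> (1 + a) * t + (b - a) * t^2 - b * t^3"
  proof (rule deriv_nonneg_imp_mono[of s t _ p'])
    fix u
    have "((\<lambda>t. (1 + a) * t + (b - a) * t^2 - b * t^3) has_real_derivative
            (1 + a) + 2 * (b - a) * u - 3 * b * u^2) (at u)"
      by (auto intro!: derivative_eq_intros)
    moreover have "(1 + a) + 2 * (b - a) * u - 3 * b * u^2 = p' u"
      by (simp add: p'_def algebra_simps power2_eq_square)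
    ultimately show "((\<lambda>t. (1 + a) * t + (b - a) * t^2 - b * t^3) has_real_derivative p' u) (at u)"
      by simp
  next
    fix u assume "u \<in> {s..t}"
    with st have "0 \<le> u" "u \<le> 1"
      by auto
    with assms show "0 \<le> p' u"
      by (simp add: p'_def)
  qed (use st in auto)
qed

lemma is_cdf_F_R18a:
  assumes "is_cdf G" "-1 \<le> a" "-1 \<le> b" "a + b \<le> 1"
  shows "is_cdf (F_R18a a b G)"
proof -
  have "continuous_on {0..1} (\<lambda>t. (1 + a) * t + (b - a) * t^2 - b * t^3)"
    by (intro continuous_intros)
  with assms is_cdf_compose[OF _ _ R18a_cubic_mono_on] show ?thesis
    by (simp add: F_R18a_def[abs_def])
qed

lemma F_R18a_eq_F_G: "F_R18a a b G = F_G (a + 1) (b + 1) G"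
  by (rule ext) (simp add: F_R18a_def F_G_def algebra_simps)

theorem proposition3:
  fixes G :: "real \<Rightarrow> real"
  assumes "is_cdf G" and "continuous_on UNIV G"
  shows "(\<forall>l1 l2. (l1, l2) \<in> S_R18a \<longrightarrow> is_cdf (F_R18a l1 l2 G))
    \<and> (\<forall>l1 l2. (l1, l2) \<in> S_MR18a \<longrightarrow> is_cdf (F_R18a l1 l2 G))
    \<and> (\<forall>l1 l2. (l1, l2) \<in> S_MR18a \<longrightarrow>
          (l1 + 1, l2 + 1) \<in> S_MG \<and> F_R18a l1 l2 G = F_G (l1 + 1) (l2 + 1) G)
    \<and> (\<forall>l1 l2. (l1, l2) \<in> S_MG \<longrightarrow>
          (l1 - 1, l2 - 1) \<in> S_MR18a \<and> F_G l1 l2 G = F_R18a (l1 - 1) (l2 - 1) G)"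
proof (intro conjI allI impI)
  fix l1 l2
  show "(l1, l2) \<in> S_R18a \<Longrightarrow> is_cdf (F_R18a l1 l2 G)"
    and "(l1, l2) \<in> S_MR18a \<Longrightarrow> is_cdf (F_R18a l1 l2 G)"
    using is_cdf_F_R18a[OF \<open>is_cdf G\<close>] by (auto simp: S_R18a_def S_MR18a_def)
  show "(l1, l2) \<in> S_MR18a \<Longrightarrow> (l1 + 1, l2 + 1) \<in> S_MG"
    and "(l1, l2) \<in> S_MG \<Longrightarrow> (l1 - 1, l2 - 1) \<in> S_MR18a"
    by (auto simp: S_MG_def S_MR18a_def)
  show "F_R18a l1 l2 G = F_G (l1 + 1) (l2 + 1) G"
    by (rule F_R18a_eq_F_G)
  show "F_G l1 l2 G = F_R18a (l1 - 1) (l2 - 1) G"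
    using F_R18a_eq_F_G[of "l1 - 1" "l2 - 1" G] by simp
qed

end
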